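(* Let $(C,\leq)$ be a poset. Then $(C,\leq)$ is a $\downarrow$-poset if and only if for all $c,d\in C$ with $c\leq d$ there exists a $\downarrow$-function $f\colon C\to C$ such that $f(d)=c$.
   Context: A semilattice with identity is a set $S$ with a binary operation (written concatenatively) and an element $1\in S$ such that for all $s,t,u\in S$: $ss=s$, $st=ts$, $(st)u=s(tu)$, and $1s=s$. An action of such an $S$ on a set $C$ is a function $C\times S\to C$, $(c,s)\mapsto cs$, such that $c(st)=(cs)t$ and $c1=c$ for all $c\in C$, $s,t\in S$. Given such an action, define $c\leq d$ on $C$ iff there is $s\in S$ with $ds=c$; this is a partial order. A poset is called a $\downarrow$-poset if it is isomorphic to a poset arising in this way from some action of some semilattice with identity on some set. For a poset $(C,\leq)$, a function $f\colon C\to C$ is a $\downarrow$-function if for all $c,d\in C$: (1) $f(c)\leq c$; (2) $c\leq d$ implies $f(c)\leq f(d)$; (3) $c\leq f(d)$ implies $f(c)=c$. *)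

theory Defs
  imports Main
begin

definition poset :: "'a set \<Rightarrow> ('a \<Rightarrow> 'a \<Rightarrow> bool) \<Rightarrow> bool" where
  "poset C le \<longleftrightarrow>
     (\<forall>c\<in>C. le c c) \<and>
     (\<forall>c\<in>C. \<forall>d\<in>C. le c d \<and> le d c \<longrightarrow> c = d) \<and>
     (\<forall>c\<in>C. \<forall>d\<in>C. \<forall>e\<in>C. le c d \<and> le d e \<longrightarrow> le c e)"

definition semilattice_id :: "'s set \<Rightarrow> ('s \<Rightarrow> 's \<Rightarrow> 's) \<Rightarrow> 's \<Rightarrow> bool" where
  "semilattice_id S m e \<longleftrightarrow>
     e \<in> S \<and>
     (\<forall>s\<in>S. \<forall>t\<in>S. m s t \<in> S) \<and>
     (\<forall>s\<in>S. m s s = s) \<and>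
     (\<forall>s\<in>S. \<forall>t\<in>S. m s t = m t s) \<and>
     (\<forall>s\<in>S. \<forall>t\<in>S. \<forall>u\<in>S. m (m s t) u = m s (m t u)) \<and>
     (\<forall>s\<in>S. m e s = s)"

definition sl_action ::
  "'s set \<Rightarrow> ('s \<Rightarrow> 's \<Rightarrow> 's) \<Rightarrow> 's \<Rightarrow> 'd set \<Rightarrow> ('d \<Rightarrow> 's \<Rightarrow> 'd) \<Rightarrow> bool" where
  "sl_action S m e D act \<longleftrightarrow>
     (\<forall>c\<in>D. \<forall>s\<in>S. act c s \<in> D) \<and>
     (\<forall>c\<in>D. \<forall>s\<in>S. \<forall>t\<in>S. act c (m s t) = act (act c s) t) \<and>
     (\<forall>c\<in>D. act c e = c)"

definition action_le :: "'s set \<Rightarrow> ('d \<Rightarrow> 's \<Rightarrow> 'd) \<Rightarrow> 'd \<Rightarrow> 'd \<Rightarrow> bool" where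
  "action_le S act c d \<longleftrightarrow> (\<exists>s\<in>S. act d s = c)"

text \<open>(C, le) is a down-poset, witnessed by a semilattice whose carrier lives in type 's
  acting on a set living in type 'd: it is order-isomorphic to the induced poset.\<close>
definition down_poset :: "'s itself \<Rightarrow> 'd itself \<Rightarrow> 'a set \<Rightarrow> ('a \<Rightarrow> 'a \<Rightarrow> bool) \<Rightarrow> bool" where
  "down_poset (_::'s itself) (_::'d itself) C le \<longleftrightarrow>
     (\<exists>(S::'s set) m e (D::'d set) act h.
        semilattice_id S m e \<and> sl_action S m e D act \<and>
        bij_betw h C D \<and>
        (\<forall>c\<in>C. \<forall>d\<in>C. le c d \<longleftrightarrow> action_le S act (h c) (h d)))"

definition down_function :: "'a set \<Rightarrow> ('a \<Rightarrow> 'a \<Rightarrow> bool) \<Rightarrow> ('a \<Rightarrow> 'a) \<Rightarrow> bool" where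
  "down_function C le f \<longleftrightarrow>
     (\<forall>c\<in>C. f c \<in> C) \<and>
     (\<forall>c\<in>C. le (f c) c) \<and>
     (\<forall>c\<in>C. \<forall>d\<in>C. le c d \<longrightarrow> le (f c) (f d)) \<and>
     (\<forall>c\<in>C. \<forall>d\<in>C. le c (f d) \<longrightarrow> f c = c)"

end

theory Submission
  imports Defs
begin

text \<open>If C carries the order of a semilattice action, right multiplication by s is a
  down-function sending d to c whenever d s = c; condition (3) holds because st\<cdot>s = st in a
  semilattice. Conversely, on any poset the down-functions are closed under composition,
  idempotent, and commute, since f (g x) and g (f x) lie below each other; so they form a
  semilattice with identity acting on C by evaluation, and the hypothesis says precisely that
  the order induced by this action is the given one.\<close>

lemma
  assumes "down_function C le f"
  shows down_function_in: "c \<in> C \<Longrightarrow> f c \<in> C"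
    and down_function_below: "c \<in> C \<Longrightarrow> le (f c) c"
    and down_function_mono: "\<lbrakk>c \<in> C; d \<in> C; le c d\<rbrakk> \<Longrightarrow> le (f c) (f d)"
    and down_function_fixes: "\<lbrakk>c \<in> C; d \<in> C; le c (f d)\<rbrakk> \<Longrightarrow> f c = c"
  using assms unfolding down_function_def by blast+

lemma
  assumes "poset C le"
  shows poset_refl: "c \<in> C \<Longrightarrow> le c c"
    and poset_antisym: "\<lbrakk>c \<in> C; d \<in> C; le c d; le d c\<rbrakk> \<Longrightarrow> c = d"
    and poset_trans: "\<lbrakk>c \<in> C; d \<in> C; e \<in> C; le c d; le d e\<rbrakk> \<Longrightarrow> le c e"
  using assms unfolding poset_def by blast+

lemma down_function_cong:
  "(\<And>x. x \<in> C \<Longrightarrow> f x = g x) \<Longrightarrow> down_function C le f \<longleftrightarrow> down_function C le g"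
  unfolding down_function_def by simp

lemma semilattice_id_absorb:
  assumes "semilattice_id S m e" "s \<in> S" "t \<in> S"
  shows "m (m s t) s = m s t"
proof -
  have "m (m s t) s = m s (m s t)"
    using assms unfolding semilattice_id_def by metis
  also have "\<dots> = m (m s s) t"
    using assms unfolding semilattice_id_def by metis
  finally show ?thesis
    using assms unfolding semilattice_id_def by metis
qed

lemma down_function_action:
  assumes sl: "semilattice_id S m e" and act: "sl_action S m e D act" and s: "s \<in> S"
  shows "down_function D (action_le S act) (\<lambda>x. act x s)"
proof -
  have act_in: "\<And>x t. x \<in> D \<Longrightarrow> t \<in> S \<Longrightarrow> act x t \<in> D"
    and act_mult: "\<And>x t u. x \<in> D \<Longrightarrow> t \<in> S \<Longrightarrow> u \<in> S \<Longrightarrow> act x (m t u) = act (act x t) u"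
    using act unfolding sl_action_def by blast+
  have m_in: "\<And>t u. t \<in> S \<Longrightarrow> u \<in> S \<Longrightarrow> m t u \<in> S"
    and m_comm: "\<And>t u. t \<in> S \<Longrightarrow> u \<in> S \<Longrightarrow> m t u = m u t"
    using sl unfolding semilattice_id_def by blast+
  show ?thesis
    unfolding down_function_def
  proof (intro conjI ballI impI)
    fix x assume x: "x \<in> D"
    show "act x s \<in> D" using act_in x s .
    show "action_le S act (act x s) x" unfolding action_le_def using s by blast
  next
    fix x y assume "x \<in> D" "y \<in> D" "action_le S act x y"
    then obtain t where t: "t \<in> S" and x: "x = act y t" unfolding action_le_def by blast
    have "act x s = act y (m s t)"
      using x act_mult \<open>y \<in> D\<close> t s m_comm by metis
    also have "\<dots> = act (act y s) t" using act_mult \<open>y \<in> D\<close> t s by blast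
    finally show "action_le S act (act x s) (act y s)" unfolding action_le_def using t by metis
  next
    fix x y assume "x \<in> D" "y \<in> D" "action_le S act x (act y s)"
    then obtain t where t: "t \<in> S" and x: "x = act y (m s t)"
      unfolding action_le_def using act_mult s by metis
    have "act x s = act y (m (m s t) s)" using x act_mult \<open>y \<in> D\<close> m_in s t by metis
    then show "act x s = x" using x semilattice_id_absorb[OF sl s t] by simp
  qed
qed

lemma down_function_transfer:
  assumes h: "bij_betw h C D" and iso: "\<forall>c\<in>C. \<forall>d\<in>C. le c d \<longleftrightarrow> le' (h c) (h d)"
    and f: "down_function D le' f"
  shows "down_function C le (inv_into C h \<circ> f \<circ> h)"
proof -
  have hC: "\<And>x. x \<in> C \<Longrightarrow> h x \<in> D" using h by (meson bij_betwE)
  have fD: "\<And>y. y \<in> D \<Longrightarrow> inv_into C h (f y) \<in> C"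
    using h down_function_in[OF f] by (meson bij_betwE bij_betw_inv_into)
  have h_inv: "\<And>y. y \<in> D \<Longrightarrow> h (inv_into C h (f y)) = f y"
    using h down_function_in[OF f] by (simp add: bij_betw_inv_into_right)
  have h_inv_h: "\<And>x. x \<in> C \<Longrightarrow> inv_into C h (h x) = x"
    using bij_betw_inv_into_left[OF h] .
  show ?thesis
    unfolding down_function_def comp_def
  proof (intro conjI ballI impI)
    fix x y assume x: "x \<in> C" and y: "y \<in> C" and "le x (inv_into C h (f (h y)))"
    then have "le' (h x) (f (h y))" using iso fD hC h_inv by metis
    then have "f (h x) = h x" using down_function_fixes[OF f] hC x y by blast
    then show "inv_into C h (f (h x)) = x" using h_inv_h x by simp
  qed (use iso hC fD h_inv down_function_below[OF f] down_function_mono[OF f] in auto)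
qed

lemma down_poset_down_function_exists:
  assumes "down_poset TYPE('s) TYPE('d) C le" and "c \<in> C" "d \<in> C" "le c d"
  shows "\<exists>f. down_function C le f \<and> f d = c"
proof -
  obtain S :: "'s set" and m e and D :: "'d set" and act h where
    sl: "semilattice_id S m e" and act: "sl_action S m e D act" and h: "bij_betw h C D"
    and iso: "\<forall>c\<in>C. \<forall>d\<in>C. le c d \<longleftrightarrow> action_le S act (h c) (h d)"
    using assms(1) unfolding down_poset_def by blast
  obtain s where s: "s \<in> S" and "act (h d) s = h c"
    using iso assms unfolding action_le_def by blast
  then have "(inv_into C h \<circ> (\<lambda>x. act x s) \<circ> h) d = c"
    using bij_betw_inv_into_left[OF h] \<open>c \<in> C\<close> by simp
  moreover have "down_function C le (inv_into C h \<circ> (\<lambda>x. act x s) \<circ> h)"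
    using down_function_transfer[OF h iso down_function_action[OF sl act s]] .
  ultimately show ?thesis by blast
qed

text \<open>Only the cardinality of the semilattice carrier matters: an injection into another
  type transports the semilattice and its action.\<close>
lemma down_posetI:
  fixes \<phi> :: "'s \<Rightarrow> 't" and D :: "'d set"
  assumes sl: "semilattice_id S m e" and act: "sl_action S m e D act"
    and h: "bij_betw h C D" and iso: "\<forall>c\<in>C. \<forall>d\<in>C. le c d \<longleftrightarrow> action_le S act (h c) (h d)"
    and \<phi>: "inj_on \<phi> S"
  shows "down_poset TYPE('t) TYPE('d) C le"
proof -
  define \<psi> where "\<psi> = inv_into S \<phi>"
  have \<psi>: "\<And>s. s \<in> S \<Longrightarrow> \<psi> (\<phi> s) = s" unfolding \<psi>_def using \<phi> by simp
  have sl': "semilattice_id (\<phi> ` S) (\<lambda>a b. \<phi> (m (\<psi> a) (\<psi> b))) (\<phi> e)"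
    using sl unfolding semilattice_id_def by (simp add: \<psi>) metis
  have act': "sl_action (\<phi> ` S) (\<lambda>a b. \<phi> (m (\<psi> a) (\<psi> b))) (\<phi> e) D (\<lambda>x a. act x (\<psi> a))"
    using sl act unfolding semilattice_id_def sl_action_def by (simp add: \<psi>)
  have le': "action_le (\<phi> ` S) (\<lambda>x a. act x (\<psi> a)) = action_le S act"
    unfolding action_le_def by (simp add: \<psi>)
  show ?thesis
    unfolding down_poset_def using sl' act' h iso[folded le'] by blast
qed

lemma down_function_id: "poset C le \<Longrightarrow> down_function C le id"
  unfolding down_function_def using poset_refl by fastforce

lemma down_function_idem:
  assumes "poset C le" "down_function C le f" "x \<in> C"
  shows "f (f x) = f x"
proof -
  have "f x \<in> C" using down_function_in assms(2,3) .
  then show ?thesis using down_function_fixes[OF assms(2) _ assms(3)] poset_refl[OF assms(1)] by blast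
qed

lemma down_function_comp:
  assumes C: "poset C le" and f: "down_function C le f" and g: "down_function C le g"
  shows "down_function C le (f \<circ> g)"
  unfolding down_function_def comp_def
proof (intro conjI ballI impI)
  fix x assume x: "x \<in> C"
  have gx: "g x \<in> C" using down_function_in[OF g x] .
  show "f (g x) \<in> C" using down_function_in[OF f gx] .
  show "le (f (g x)) x"
    using poset_trans[OF C \<open>f (g x) \<in> C\<close> gx x] down_function_below[OF f gx]
      down_function_below[OF g x] by blast
next
  fix x y assume "x \<in> C" "y \<in> C" "le x y"
  then show "le (f (g x)) (f (g y))"
    using down_function_mono[OF f] down_function_mono[OF g] down_function_in[OF g] by blast
next
  fix x y assume x: "x \<in> C" and y: "y \<in> C" and le: "le x (f (g y))"
  have gy: "g y \<in> C" using down_function_in[OF g y] .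
  have "le x (g y)"
    using poset_trans[OF C x down_function_in[OF f gy] gy le] down_function_below[OF f gy] by blast
  then have "g x = x" using down_function_fixes[OF g x y] by blast
  moreover have "f x = x" using down_function_fixes[OF f x gy le] .
  ultimately show "f (g x) = x" by simp
qed

lemma down_function_commute:
  assumes C: "poset C le" and f: "down_function C le f" and g: "down_function C le g"
    and x: "x \<in> C"
  shows "f (g x) = g (f x)"
proof -
  have below: "le (f (g x)) (g (f x))"
    if f: "down_function C le f" and g: "down_function C le g" for f g
  proof -
    have gx: "g x \<in> C" and fx: "f x \<in> C"
      using down_function_in[OF g x] down_function_in[OF f x] .
    have fgx: "f (g x) \<in> C" using down_function_in[OF f gx] .
    have "g (f (g x)) = f (g x)"
      using down_function_fixes[OF g fgx x] down_function_below[OF f gx] by blast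
    moreover have "le (g (f (g x))) (g (f x))"
      using down_function_mono[OF g fgx fx] down_function_mono[OF f gx x]
        down_function_below[OF g x] by blast
    ultimately show ?thesis by simp
  qed
  show ?thesis
    using poset_antisym[OF C _ _ below[OF f g] below[OF g f]]
      down_function_in[OF f down_function_in[OF g x]] down_function_in[OF g down_function_in[OF f x]]
    by blast
qed

text \<open>Down-functions are taken to be the identity outside C, so that they commute as functions
  and not only on C.\<close>
definition down_functions :: "'a set \<Rightarrow> ('a \<Rightarrow> 'a \<Rightarrow> bool) \<Rightarrow> ('a \<Rightarrow> 'a) set" where
  "down_functions C le = {f. down_function C le f \<and> (\<forall>x. x \<notin> C \<longrightarrow> f x = x)}"

lemma down_functions_commute:
  assumes C: "poset C le" and f: "f \<in> down_functions C le" and g: "g \<in> down_functions C le"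
  shows "f \<circ> g = g \<circ> f"
proof
  fix x
  show "(f \<circ> g) x = (g \<circ> f) x"
  proof (cases "x \<in> C")
    case True
    then show ?thesis
      using down_function_commute[OF C _ _ True] f g unfolding down_functions_def by simp
  next
    case False
    then show ?thesis using f g unfolding down_functions_def by simp
  qed
qed

lemma semilattice_down_functions:
  assumes C: "poset C le"
  shows "semilattice_id (down_functions C le) (\<circ>) id"
  unfolding semilattice_id_def
proof (intro conjI ballI)
  show "id \<in> down_functions C le"
    unfolding down_functions_def using down_function_id[OF C] by simp
next
  fix f g assume f: "f \<in> down_functions C le" and g: "g \<in> down_functions C le"
  then show "f \<circ> g \<in> down_functions C le"
    using down_function_comp[OF C] unfolding down_functions_def by simp
  show "f \<circ> g = g \<circ> f" using down_functions_commute[OF C f g] .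
next
  fix f assume f: "f \<in> down_functions C le"
  show "f \<circ> f = f"
  proof
    fix x show "(f \<circ> f) x = f x"
      using down_function_idem[OF C, of f x] f unfolding down_functions_def by (cases "x \<in> C") auto
  qed
qed (simp_all add: comp_assoc)

lemma sl_action_down_functions:
  assumes C: "poset C le"
  shows "sl_action (down_functions C le) (\<circ>) id C (\<lambda>x f. f x)"
  unfolding sl_action_def
proof (intro conjI ballI)
  fix x f assume "x \<in> C" and "f \<in> down_functions C le"
  then show "f x \<in> C" using down_function_in[of C le f x] unfolding down_functions_def by simp
next
  fix x f g assume "x \<in> C" and f: "f \<in> down_functions C le" and g: "g \<in> down_functions C le"
  have "(f \<circ> g) x = (g \<circ> f) x" using down_functions_commute[OF C f g] by simp
  then show "(f \<circ> g) x = g (f x)" by simp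
qed simp

lemma action_le_down_functions:
  assumes ex: "\<forall>c\<in>C. \<forall>d\<in>C. le c d \<longrightarrow> (\<exists>f. down_function C le f \<and> f d = c)"
    and c: "c \<in> C" and d: "d \<in> C"
  shows "action_le (down_functions C le) (\<lambda>x f. f x) c d \<longleftrightarrow> le c d"
proof
  assume "action_le (down_functions C le) (\<lambda>x f. f x) c d"
  then obtain f where "down_function C le f" "f d = c"
    unfolding action_le_def down_functions_def by blast
  then show "le c d" using down_function_below[OF _ d] by blast
next
  assume "le c d"
  then obtain f where f: "down_function C le f" and "f d = c" using ex c d by blast
  let ?f = "\<lambda>x. if x \<in> C then f x else x"
  have "down_function C le ?f" using f down_function_cong[of C f ?f le] by simp
  then have "?f \<in> down_functions C le" unfolding down_functions_def by simp
  with \<open>f d = c\<close> d show "action_le (down_functions C le) (\<lambda>x f. f x) c d"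
    unfolding action_le_def by (intro bexI[of _ ?f]) simp_all
qed

lemma down_poset_if_down_function_exists:
  fixes C :: "'a set"
  assumes C: "poset C le"
    and ex: "\<forall>c\<in>C. \<forall>d\<in>C. le c d \<longrightarrow> (\<exists>f. down_function C le f \<and> f d = c)"
  shows "down_poset TYPE(('a \<Rightarrow> 'a) set) TYPE('a) C le"
proof (rule down_posetI[OF semilattice_down_functions[OF C] sl_action_down_functions[OF C]
      bij_betw_id _ inj_singleton])
  show "\<forall>c\<in>C. \<forall>d\<in>C. le c d \<longleftrightarrow> action_le (down_functions C le) (\<lambda>x f. f x) (id c) (id d)"
  proof (intro ballI)
    fix c d assume "c \<in> C" "d \<in> C"
    then show "le c d \<longleftrightarrow> action_le (down_functions C le) (\<lambda>x f. f x) (id c) (id d)"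
      using action_le_down_functions[OF ex] by (simp only: id_apply)
  qed
qed

theorem theorem1:
  fixes C :: "'a set" and le :: "'a \<Rightarrow> 'a \<Rightarrow> bool"
  assumes "poset C le"
  shows "(down_poset TYPE('s) TYPE('d) C le \<longrightarrow>
            (\<forall>c\<in>C. \<forall>d\<in>C. le c d \<longrightarrow> (\<exists>f. down_function C le f \<and> f d = c)))
       \<and> ((\<forall>c\<in>C. \<forall>d\<in>C. le c d \<longrightarrow> (\<exists>f. down_function C le f \<and> f d = c)) \<longrightarrow>
            down_poset TYPE(('a \<Rightarrow> 'a) set) TYPE('a) C le)"
proof (intro conjI impI ballI)
  fix c d assume "down_poset TYPE('s) TYPE('d) C le" "c \<in> C" "d \<in> C" "le c d"
  then show "\<exists>f. down_function C le f \<and> f d = c" by (rule down_poset_down_function_exists)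
next
  assume "\<forall>c\<in>C. \<forall>d\<in>C. le c d \<longrightarrow> (\<exists>f. down_function C le f \<and> f d = c)"
  then show "down_poset TYPE(('a \<Rightarrow> 'a) set) TYPE('a) C le"
    by (rule down_poset_if_down_function_exists[OF assms])
qed

end
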